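(* For every composition $\alpha$, $\pi(S^*_\alpha)=p_\alpha$.
   Context: $\mathrm{QSym}$ is the Hopf algebra of quasisymmetric functions with monomial basis $M_\alpha=\sum_{i_1<\cdots<i_\ell}x_{i_1}^{\alpha_1}\cdots x_{i_\ell}^{\alpha_\ell}$, product the ordinary product and coproduct $\Delta(M_\alpha)=\sum_{\beta\gamma=\alpha}M_\beta\otimes M_\gamma$. For compositions $\alpha,\beta$ of $n$, $\beta\le\alpha$ means the set of partial sums $\{\beta_1,\beta_1+\beta_2,\dots\}$ (excluding the total) is contained in that of $\alpha$. Shuffle functions: for $\alpha=(\alpha_1,\dots,\alpha_\ell)$ let $\mathrm{OtE}(\alpha)=\{i:\alpha_i\text{ odd},\ \alpha_{i+1}\text{ even}\}=\{i_1<\cdots<i_k\}$ and $m_o(\alpha)=(\alpha_1+\cdots+\alpha_{i_1},\ \alpha_{i_1+1}+\cdots+\alpha_{i_2},\ \dots,\ \alpha_{i_k+1}+\cdots+\alpha_\ell)$. For $m_o(\alpha)\le\beta\le\alpha$, each part $\beta_i$ is a sum of a block of consecutive parts of $\alpha$; with $\mathrm{O}(i),\mathrm{E}(i)$ the numbers of odd and even parts of that block put $c_\alpha^\beta=\prod_i\frac{1}{\mathrm{O}(i)!\mathrm{E}(i)!}$. Then $S_\alpha=\sum_{m_o(\alpha)\le\beta\le\alpha}c_\alpha^\beta M_\beta$; these form a basis of $\mathrm{QSym}$. $\mathrm{NSym}$ is the graded dual Hopf algebra of $\mathrm{QSym}$; it is the free associative algebra on $H_1,H_2,\dots$ with $\Delta(H_n)=\sum_{i+j=n}H_i\otimes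 H_j$, and $H_\alpha=H_{\alpha_1}\cdots H_{\alpha_\ell}$ is the basis dual to $\{M_\alpha\}$. $\{S^*_\alpha\}$ is the basis of $\mathrm{NSym}$ dual to $\{S_\alpha\}$: $\langle S^*_\alpha,S_\beta\rangle=\delta_{\alpha,\beta}$. $\mathrm{Sym}\subseteq\mathrm{QSym}$ is the ring of symmetric functions; $h_n=\sum_{\alpha\models n}M_\alpha$, $p_n=\frac1n M_{(n)}$ (scaled power sums), $p_\alpha=p_{\alpha_1}\cdots p_{\alpha_\ell}$. $\pi:\mathrm{NSym}\to\mathrm{Sym}$ is the algebra morphism with $\pi(H_n)=h_n$. *)

theory Defs
  imports Complex_Main
begin

(* Formal power series in the variables x_0, x_1, ... over the rationals:
   a monomial is an exponent vector nat => nat (finite support),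
   a series is a coefficient function on monomials. *)
type_synonym monom = "nat \<Rightarrow> nat"
type_synonym series = "monom \<Rightarrow> rat"

definition smult :: "series \<Rightarrow> series \<Rightarrow> series" where
  "smult f g = (\<lambda>m. \<Sum>a\<in>{a. \<forall>i. a i \<le> m i}. f a * g (\<lambda>i. m i - a i))"

definition sone :: series where
  "sone = (\<lambda>m. if m = (\<lambda>_. 0) then 1 else 0)"

definition sprod_list :: "series list \<Rightarrow> series" where
  "sprod_list fs = foldr smult fs sone"

definition sscale :: "rat \<Rightarrow> series \<Rightarrow> series" where
  "sscale c f = (\<lambda>m. c * f m)"

definition is_comp :: "nat list \<Rightarrow> bool" where
  "is_comp \<alpha> \<longleftrightarrow> (\<forall>a\<in>set \<alpha>. 0 < a)"

definition comps :: "nat \<Rightarrow> nat list set" where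
  "comps n = {\<alpha>. is_comp \<alpha> \<and> sum_list \<alpha> = n}"

definition M :: "nat list \<Rightarrow> series" where
  "M \<alpha> = (\<lambda>m. if finite {i. m i \<noteq> 0} \<and>
                  map m (sorted_list_of_set {i. m i \<noteq> 0}) = \<alpha> then 1 else 0)"

definition h :: "nat \<Rightarrow> series" where
  "h n = (\<lambda>m. \<Sum>\<alpha>\<in>comps n. M \<alpha> m)"

definition hc :: "nat list \<Rightarrow> series" where
  "hc \<alpha> = sprod_list (map h \<alpha>)"

definition p :: "nat \<Rightarrow> series" where
  "p n = sscale (1 / of_nat n) (M [n])"

definition pc :: "nat list \<Rightarrow> series" where
  "pc \<alpha> = sprod_list (map p \<alpha>)"

definition psums :: "nat list \<Rightarrow> nat set" where
  "psums \<alpha> = {sum_list (take k \<alpha>) | k. 0 < k \<and> k < length \<alpha>}"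

(* beta \<le> alpha (refinement order) for compositions of the same n *)
definition comp_le :: "nat list \<Rightarrow> nat list \<Rightarrow> bool" where
  "comp_le \<beta> \<alpha> \<longleftrightarrow> psums \<beta> \<subseteq> psums \<alpha>"

(* OtE(alpha), 1-indexed: alpha_i odd and alpha_{i+1} even *)
definition OtE :: "nat list \<Rightarrow> nat set" where
  "OtE \<alpha> = {i. 1 \<le> i \<and> i < length \<alpha> \<and> odd (\<alpha> ! (i - 1)) \<and> even (\<alpha> ! i)}"

(* m_o(alpha): the composition of |alpha| whose partial sums are those at the OtE positions *)
definition mo :: "nat list \<Rightarrow> nat list" where
  "mo \<alpha> = (let S = sorted_list_of_set ((\<lambda>i. sum_list (take i \<alpha>)) ` OtE \<alpha>) @ [sum_list \<alpha>]
           in map (\<lambda>j. S ! j - (if j = 0 then 0 else S ! (j - 1))) [0..<length S])"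

fun blocks :: "nat list \<Rightarrow> nat list \<Rightarrow> nat list list" where
  "blocks [] as = []"
| "blocks (b # bs) as =
     (let k = (LEAST k. sum_list (take k as) = b) in take k as # blocks bs (drop k as))"

definition cblock :: "nat list \<Rightarrow> rat" where
  "cblock B = 1 / (of_nat (fact (length (filter odd B))) * of_nat (fact (length (filter even B))))"

definition c :: "nat list \<Rightarrow> nat list \<Rightarrow> rat" where
  "c \<alpha> \<beta> = (\<Prod>B\<leftarrow>blocks \<beta> \<alpha>. cblock B)"

definition Scoef :: "nat list \<Rightarrow> nat list \<Rightarrow> rat" where
  "Scoef \<alpha> \<beta> = (if \<beta> \<in> comps (sum_list \<alpha>) \<and> comp_le (mo \<alpha>) \<beta> \<and> comp_le \<beta> \<alpha>
                 then c \<alpha> \<beta> else 0)"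

definition S :: "nat list \<Rightarrow> series" where
  "S \<alpha> = (\<lambda>m. \<Sum>\<beta>\<in>comps (sum_list \<alpha>). Scoef \<alpha> \<beta> * M \<beta> m)"

(* NSym: elements are finite rational combinations of the basis H_gamma (gamma a composition),
   represented by their coefficient functions. *)
definition is_nsym :: "(nat list \<Rightarrow> rat) \<Rightarrow> bool" where
  "is_nsym f \<longleftrightarrow> finite {\<gamma>. f \<gamma> \<noteq> 0} \<and> (\<forall>\<gamma>. f \<gamma> \<noteq> 0 \<longrightarrow> is_comp \<gamma>)"

(* pairing <f, S_beta>, using <H_gamma, M_delta> = delta_{gamma,delta} *)
definition pair_S :: "(nat list \<Rightarrow> rat) \<Rightarrow> nat list \<Rightarrow> rat" where
  "pair_S f \<beta> = (\<Sum>\<gamma>\<in>{\<gamma>. f \<gamma> \<noteq> 0}. f \<gamma> * Scoef \<beta> \<gamma>)"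

definition Sstar :: "nat list \<Rightarrow> (nat list \<Rightarrow> rat)" where
  "Sstar \<alpha> = (THE f. is_nsym f \<and> (\<forall>\<beta>. is_comp \<beta> \<longrightarrow> pair_S f \<beta> = (if \<beta> = \<alpha> then 1 else 0)))"

(* pi : NSym -> Sym, the algebra map with H_n |-> h_n, so H_gamma |-> h_gamma *)
definition pi_map :: "(nat list \<Rightarrow> rat) \<Rightarrow> series" where
  "pi_map f = (\<lambda>m. \<Sum>\<gamma>\<in>{\<gamma>. f \<gamma> \<noteq> 0}. f \<gamma> * hc \<gamma> m)"

end

theory Submission
  imports Defs "HOL-Computational_Algebra.Formal_Power_Series"
begin

text \<open>With the scaled power sums \<open>p\<^sub>n = M\<^sub>(\<^sub>n\<^sub>) / n\<close>, Newton's identity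
  \<open>n h\<^sub>n = \<Sum>\<^sub>k k p\<^sub>k h\<^bsub>n-k\<^esub>\<close> says \<open>H' = P' H\<close> for the generating series
  \<open>H = \<Sum> h\<^sub>n t\<^sup>n\<close> and \<open>P = \<Sum> p\<^sub>n t\<^sup>n\<close>, so \<open>H = exp P = exp P\<^sub>e\<^sub>v\<^sub>e\<^sub>n exp P\<^sub>o\<^sub>d\<^sub>d\<close>.
  Hence \<open>h\<^sub>n\<close> is the sum of \<open>p\<^sub>\<beta> / (O(\<beta>)! E(\<beta>)!)\<close> over the compositions \<open>\<beta>\<close> of \<open>n\<close>
  whose even parts precede their odd parts, and multiplying out \<open>h\<^sub>\<gamma> = h\<^sub>\<gamma>\<^sub>1 h\<^sub>\<gamma>\<^sub>2 \<dots>\<close>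
  gives \<open>h\<^sub>\<gamma> = \<Sum>\<^sub>\<beta> c\<^sub>\<beta>\<^sup>\<gamma> p\<^sub>\<beta>\<close>, with exactly the coefficients of
  \<open>S\<^sub>\<beta> = \<Sum>\<^sub>\<gamma> c\<^sub>\<beta>\<^sup>\<gamma> M\<^sub>\<gamma>\<close>. In other words \<open>\<pi>(H\<^sub>\<gamma>) = \<Sum>\<^sub>\<beta> \<langle>H\<^sub>\<gamma>, S\<^sub>\<beta>\<rangle> p\<^sub>\<beta>\<close>;
  by linearity \<open>\<pi>(f) = \<Sum>\<^sub>\<beta> \<langle>f, S\<^sub>\<beta>\<rangle> p\<^sub>\<beta>\<close>, and \<open>\<pi>(S\<^sup>*\<^sub>\<alpha>) = p\<^sub>\<alpha>\<close>.
  The dual basis exists because the transition matrix from \<open>S\<close> to \<open>M\<close> is unitriangular.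

  Series in \<open>x\<^sub>0, x\<^sub>1, \<dots>\<close> are handled through the ring \<open>mseries\<close> of series vanishing on
  monomials of infinite support, and generating series in \<open>t\<close> as formal power series over it.\<close>

unbundle fps_syntax

section \<open>The ring of series\<close>

text \<open>The product \<^const>\<open>smult\<close> vanishes at monomials of infinite support, so \<^const>\<open>sone\<close>
  is a unit only for series that vanish there as well.\<close>

definition proper_series :: "series \<Rightarrow> bool" where
  "proper_series f \<longleftrightarrow> (\<forall>m. infinite {i. m i \<noteq> 0} \<longrightarrow> f m = 0)"

definition mdivisors :: "monom \<Rightarrow> monom set" where
  "mdivisors m = {a. \<forall>i. a i \<le> m i}"

lemma smult_eq_sum_mdivisors: "smult f g m = (\<Sum>a\<in>mdivisors m. f a * g (\<lambda>i. m i - a i))"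
  by (simp add: smult_def mdivisors_def)

lemma mdivisors_support_subset: "a \<in> mdivisors m \<Longrightarrow> {i. a i \<noteq> 0} \<subseteq> {i. m i \<noteq> 0}"
  unfolding mdivisors_def by (metis (mono_tags, lifting) Collect_mono le_zero_eq mem_Collect_eq)

lemma finite_mdivisors:
  assumes "finite {i. m i \<noteq> 0}"
  shows "finite (mdivisors m)"
proof -
  let ?S = "{i. m i \<noteq> 0}"
  let ?ext = "\<lambda>f i. if i \<in> ?S then f i else 0"
  have "mdivisors m \<subseteq> ?ext ` PiE ?S (\<lambda>i. {0..m i})"
  proof
    fix a assume a: "a \<in> mdivisors m"
    then have "a = ?ext (restrict a ?S)"
      using mdivisors_support_subset by (fastforce simp: fun_eq_iff)
    moreover have "restrict a ?S \<in> PiE ?S (\<lambda>i. {0..m i})"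
      using a by (auto simp: mdivisors_def)
    ultimately show "a \<in> ?ext ` PiE ?S (\<lambda>i. {0..m i})" by blast
  qed
  moreover have "finite (PiE ?S (\<lambda>i. {0..m i}))"
    using assms by (intro finite_PiE) auto
  ultimately show ?thesis by (meson finite_imageI finite_subset)
qed

lemma infinite_mdivisors:
  assumes "infinite {i. m i \<noteq> 0}"
  shows "infinite (mdivisors m)"
proof
  assume fin: "finite (mdivisors m)"
  let ?single = "\<lambda>i j. if j = i then m i else 0"
  have "?single ` {i. m i \<noteq> 0} \<subseteq> mdivisors m" by (auto simp: mdivisors_def)
  moreover have "inj_on ?single {i. m i \<noteq> 0}"
    by (rule inj_onI) (metis (mono_tags, lifting) mem_Collect_eq)
  ultimately have "finite {i. m i \<noteq> 0}"
    using fin by (meson finite_imageD finite_subset)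
  with assms show False by simp
qed

lemma smult_infinite_support: "infinite {i. m i \<noteq> 0} \<Longrightarrow> smult f g m = 0"
  by (simp add: smult_eq_sum_mdivisors infinite_mdivisors)

lemma proper_series_smult: "proper_series (smult f g)"
  by (simp add: proper_series_def smult_infinite_support)

lemma smult_commute: "smult f g m = smult g f m"
proof (cases "finite {i. m i \<noteq> 0}")
  case True
  let ?compl = "\<lambda>a i. m i - a i"
  show ?thesis unfolding smult_eq_sum_mdivisors
    by (rule sum.reindex_bij_witness[of _ ?compl ?compl])
      (auto simp: mdivisors_def fun_eq_iff mult.commute)
next
  case False
  then show ?thesis by (simp add: smult_infinite_support)
qed

lemma sum_mdivisors_mdivisors:
  "(\<Sum>(a, b)\<in>Sigma (mdivisors m) mdivisors. F a b) =
   (\<Sum>(b, d)\<in>Sigma (mdivisors m) (\<lambda>b. mdivisors (\<lambda>i. m i - b i)). F (\<lambda>i. b i + d i) b)"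
proof (rule sum.reindex_bij_witness[of _ "\<lambda>(b, d). (\<lambda>i. b i + d i, b)" "\<lambda>(a, b). (b, \<lambda>i. a i - b i)"])
  fix x assume "x \<in> Sigma (mdivisors m) mdivisors"
  then obtain a b where [simp]: "x = (a, b)" and le: "\<forall>i. a i \<le> m i" "\<forall>i. b i \<le> a i"
    by (auto simp: mdivisors_def)
  show "(case case x of (a, b) \<Rightarrow> (b, \<lambda>i. a i - b i) of (b, d) \<Rightarrow> (\<lambda>i. b i + d i, b)) = x"
    using le by (auto simp: fun_eq_iff)
  then show "(case case x of (a, b) \<Rightarrow> (b, \<lambda>i. a i - b i) of (b, d) \<Rightarrow> F (\<lambda>i. b i + d i) b) =
      (case x of (a, b) \<Rightarrow> F a b)"
    by simp
  show "(case x of (a, b) \<Rightarrow> (b, \<lambda>i. a i - b i)) \<in> Sigma (mdivisors m) (\<lambda>b. mdivisors (\<lambda>i. m i - b i))"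
    using le by (auto simp: mdivisors_def intro: le_trans diff_le_mono)
next
  fix y assume "y \<in> Sigma (mdivisors m) (\<lambda>b. mdivisors (\<lambda>i. m i - b i))"
  then obtain b d where [simp]: "y = (b, d)" and le: "\<forall>i. b i \<le> m i" "\<forall>i. d i \<le> m i - b i"
    by (auto simp: mdivisors_def)
  show "(case case y of (b, d) \<Rightarrow> (\<lambda>i. b i + d i, b) of (a, b) \<Rightarrow> (b, \<lambda>i. a i - b i)) = y"
    by (simp add: fun_eq_iff)
  show "(case y of (b, d) \<Rightarrow> (\<lambda>i. b i + d i, b)) \<in> Sigma (mdivisors m) mdivisors"
    using le by (auto simp: mdivisors_def) (metis le_diff_conv2 add.commute)
qed

lemma smult_assoc: "smult (smult f g) k m = smult f (smult g k) m"
proof (cases "finite {i. m i \<noteq> 0}")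
  case True
  have fin: "finite (mdivisors a)" if "a \<in> mdivisors m" for a
    using finite_subset[OF mdivisors_support_subset[OF that] True] by (rule finite_mdivisors)
  have fin': "finite (mdivisors (\<lambda>i. m i - b i))" for b
    using True by (intro finite_mdivisors, elim finite_subset[rotated]) auto
  have "smult (smult f g) k m =
      (\<Sum>(a, b)\<in>Sigma (mdivisors m) mdivisors. f b * g (\<lambda>i. a i - b i) * k (\<lambda>i. m i - a i))"
    unfolding smult_eq_sum_mdivisors sum_distrib_right
    using True fin by (subst sum.Sigma) (auto intro: finite_mdivisors)
  also have "\<dots> = (\<Sum>(b, d)\<in>Sigma (mdivisors m) (\<lambda>b. mdivisors (\<lambda>i. m i - b i)).
                      f b * (g d * k (\<lambda>i. m i - b i - d i)))"
    by (simp add: sum_mdivisors_mdivisors mult.assoc)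
  also have "\<dots> = smult f (smult g k) m"
    unfolding smult_eq_sum_mdivisors sum_distrib_left
    using True fin' by (subst sum.Sigma) (auto intro: finite_mdivisors)
  finally show ?thesis .
next
  case False
  then show ?thesis by (simp add: smult_infinite_support)
qed

lemma smult_sone_left:
  assumes "proper_series f"
  shows "smult sone f m = f m"
proof (cases "finite {i. m i \<noteq> 0}")
  case True
  have "smult sone f m = (\<Sum>a\<in>mdivisors m. if a = (\<lambda>_. 0) then f (\<lambda>i. m i - a i) else 0)"
    unfolding smult_eq_sum_mdivisors sone_def by (intro sum.cong) auto
  also have "\<dots> = f m"
    using True by (simp add: finite_mdivisors) (simp add: mdivisors_def)
  finally show ?thesis .
next
  case False
  with assms show ?thesis by (simp add: smult_infinite_support proper_series_def)
qed

typedef mseries = "{f. proper_series f}"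
  by (rule exI[of _ "\<lambda>_. 0"]) (simp add: proper_series_def)

setup_lifting type_definition_mseries

instantiation mseries :: comm_ring_1
begin

lift_definition zero_mseries :: mseries is "\<lambda>_. 0"
  by (simp add: proper_series_def)

lift_definition one_mseries :: mseries is sone
  by (auto simp: proper_series_def sone_def)

lift_definition plus_mseries :: "mseries \<Rightarrow> mseries \<Rightarrow> mseries" is "\<lambda>f g m. f m + g m"
  by (simp add: proper_series_def)

lift_definition minus_mseries :: "mseries \<Rightarrow> mseries \<Rightarrow> mseries" is "\<lambda>f g m. f m - g m"
  by (simp add: proper_series_def)

lift_definition uminus_mseries :: "mseries \<Rightarrow> mseries" is "\<lambda>f m. - f m"
  by (simp add: proper_series_def)

lift_definition times_mseries :: "mseries \<Rightarrow> mseries \<Rightarrow> mseries" is smult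
  by (rule proper_series_smult)

instance
proof
  fix a b c :: mseries
  show "a * b * c = a * (b * c)" by transfer (simp add: smult_assoc fun_eq_iff)
  show "a * b = b * a" by transfer (simp add: smult_commute fun_eq_iff)
  show "1 * a = a" by transfer (simp add: smult_sone_left fun_eq_iff)
  show "(a + b) * c = a * c + b * c"
    by transfer (simp add: fun_eq_iff smult_def distrib_right sum.distrib)
  show "a + b + c = a + (b + c)" by transfer (simp add: fun_eq_iff)
  show "a + b = b + a" by transfer (simp add: fun_eq_iff)
  show "0 + a = a" by transfer (simp add: fun_eq_iff)
  show "- a + a = 0" by transfer (simp add: fun_eq_iff)
  show "a - b = a + - b" by transfer (simp add: fun_eq_iff)
  show "(0::mseries) \<noteq> 1"
    by transfer (auto simp: fun_eq_iff sone_def dest: spec[of _ "\<lambda>_. 0"])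
qed

end

lemma proper_series_Rep_mseries: "proper_series (Rep_mseries x)"
  using Rep_mseries by simp

lemma Rep_mseries_infinite_support: "infinite {i. m i \<noteq> 0} \<Longrightarrow> Rep_mseries x m = 0"
  using proper_series_Rep_mseries[of x] by (simp add: proper_series_def)

lemma Rep_mseries_sum: "Rep_mseries (sum f A) = (\<lambda>m. \<Sum>x\<in>A. Rep_mseries (f x) m)"
  by (induct A rule: infinite_finite_induct) (simp_all add: zero_mseries.rep_eq plus_mseries.rep_eq)

lemma Rep_mseries_prod_list: "Rep_mseries (prod_list xs) = sprod_list (map Rep_mseries xs)"
  by (induct xs) (simp_all add: sprod_list_def one_mseries.rep_eq times_mseries.rep_eq)

lift_definition mseries_of_rat :: "rat \<Rightarrow> mseries" is "\<lambda>q m. q * sone m"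
  by (auto simp: proper_series_def sone_def)

lemma Rep_mseries_of_rat_mult: "Rep_mseries (mseries_of_rat q * x) = (\<lambda>m. q * Rep_mseries x m)"
proof
  fix m
  have "Rep_mseries (mseries_of_rat q * x) m = q * smult sone (Rep_mseries x) m"
    by (simp add: times_mseries.rep_eq mseries_of_rat.rep_eq smult_def sum_distrib_left mult.assoc)
  also have "\<dots> = q * Rep_mseries x m"
    by (simp add: smult_sone_left proper_series_Rep_mseries)
  finally show "Rep_mseries (mseries_of_rat q * x) m = q * Rep_mseries x m" .
qed

lemma mseries_of_rat_mult: "mseries_of_rat (a * b) = mseries_of_rat a * mseries_of_rat b"
  by (simp add: Rep_mseries_inject[symmetric] Rep_mseries_of_rat_mult mseries_of_rat.rep_eq fun_eq_iff)

lemma mseries_of_rat_add: "mseries_of_rat (a + b) = mseries_of_rat a + mseries_of_rat b"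
  by transfer (simp add: fun_eq_iff algebra_simps)

lemma mseries_of_rat_1 [simp]: "mseries_of_rat 1 = 1"
  by transfer simp

lemma mseries_of_rat_0 [simp]: "mseries_of_rat 0 = 0"
  by transfer simp

lemma mseries_of_rat_of_nat: "mseries_of_rat (of_nat n) = of_nat n"
  by (induct n) (simp_all add: mseries_of_rat_add)

lemma Rep_mseries_of_nat_mult: "Rep_mseries (of_nat n * x) = (\<lambda>m. of_nat n * Rep_mseries x m)"
  using Rep_mseries_of_rat_mult[of "of_nat n"] by (simp add: mseries_of_rat_of_nat)

lemma mult_of_nat_cancel_mseries:
  assumes "0 < n" and "of_nat n * (x::mseries) = of_nat n * y"
  shows "x = y"
proof -
  have "mseries_of_rat (1 / of_nat n) * of_nat n = 1"
    using assms(1) by (simp add: mseries_of_rat_of_nat[symmetric] mseries_of_rat_mult[symmetric])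
  with assms(2) show ?thesis by (metis mult.assoc mult_1)
qed

section \<open>The exponential of a power series\<close>

definition exp_partial :: "mseries fps \<Rightarrow> nat \<Rightarrow> mseries fps" where
  "exp_partial A N = (\<Sum>l\<le>N. fps_const (mseries_of_rat (1 / fact l)) * A ^ l)"

text \<open>\<open>exp A = \<Sum>\<^sub>l A\<^sup>l / l!\<close> is only meaningful for \<^prop>\<open>A $ 0 = 0\<close>; then the \<open>n\<close>-th
  coefficient involves only the terms \<open>l \<le> n\<close>.\<close>

definition exp_series :: "mseries fps \<Rightarrow> mseries fps" where
  "exp_series A = Abs_fps (\<lambda>n. exp_partial A n $ n)"

lemma exp_partial_nth: "exp_partial A N $ i = (\<Sum>l\<le>N. mseries_of_rat (1 / fact l) * (A ^ l) $ i)"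
  by (simp add: exp_partial_def fps_sum_nth)

lemma exp_partial_nth_eq_exp_series:
  assumes "A $ 0 = 0" and "i \<le> N"
  shows "exp_partial A N $ i = exp_series A $ i"
proof -
  have "(\<Sum>l\<le>N. mseries_of_rat (1 / fact l) * (A ^ l) $ i) =
        (\<Sum>l\<le>i. mseries_of_rat (1 / fact l) * (A ^ l) $ i)"
    by (rule sum.mono_neutral_right)
      (use assms startsby_zero_power_prefix[OF assms(1)] in auto)
  then show ?thesis by (simp add: exp_partial_nth exp_series_def)
qed

lemma exp_series_nth_0 [simp]: "exp_series A $ 0 = 1"
  by (simp add: exp_series_def exp_partial_nth)

lemma fps_deriv_exp_partial: "fps_deriv (exp_partial A (Suc N)) = exp_partial A N * fps_deriv A"
proof -
  let ?c = "\<lambda>l. fps_const (mseries_of_rat (1 / fact l))"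
  have "fps_deriv (exp_partial A (Suc N)) =
      (\<Sum>l\<le>Suc N. ?c l * (fps_const (of_nat l) * fps_deriv A * A ^ (l - 1)))"
    by (simp only: exp_partial_def fps_deriv_sum fps_deriv_mult_const_left fps_deriv_power)
  also have "\<dots> = (\<Sum>l\<le>N. ?c (Suc l) * (fps_const (of_nat (Suc l)) * fps_deriv A * A ^ l))"
    by (subst sum.atMost_Suc_shift) simp
  also have "\<dots> = (\<Sum>l\<le>N. ?c l * A ^ l * fps_deriv A)"
  proof (rule sum.cong[OF refl])
    fix l
    have "?c (Suc l) * fps_const (of_nat (Suc l)) = ?c l"
      by (simp add: mseries_of_rat_of_nat[symmetric] mseries_of_rat_mult[symmetric] del: of_nat_Suc)
    then show "?c (Suc l) * (fps_const (of_nat (Suc l)) * fps_deriv A * A ^ l) = ?c l * A ^ l * fps_deriv A"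
      by (metis (no_types, lifting) mult.assoc mult.commute)
  qed
  also have "\<dots> = exp_partial A N * fps_deriv A"
    by (simp add: exp_partial_def sum_distrib_right)
  finally show ?thesis .
qed

lemma fps_deriv_exp_series:
  assumes "A $ 0 = 0"
  shows "fps_deriv (exp_series A) = fps_deriv A * exp_series A"
proof (rule fps_ext)
  fix n
  have "fps_deriv (exp_series A) $ n = of_nat (n + 1) * exp_partial A (Suc n) $ (n + 1)"
    using exp_partial_nth_eq_exp_series[OF assms, of "n + 1" "Suc n"] by simp
  also have "\<dots> = (exp_partial A n * fps_deriv A) $ n"
    by (simp only: fps_deriv_exp_partial[symmetric] fps_deriv_nth)
  also have "\<dots> = (exp_series A * fps_deriv A) $ n"
    by (simp add: fps_mult_nth exp_partial_nth_eq_exp_series[OF assms])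
  finally show "fps_deriv (exp_series A) $ n = (fps_deriv A * exp_series A) $ n"
    by (simp only: mult.commute)
qed

lemma fps_deriv_eq_mult_unique:
  fixes F G D :: "mseries fps"
  assumes "F $ 0 = G $ 0" and "fps_deriv F = D * F" and "fps_deriv G = D * G"
  shows "F = G"
proof -
  have "\<forall>i\<le>n. F $ i = G $ i" for n
  proof (induct n)
    case 0
    then show ?case using assms by simp
  next
    case (Suc n)
    have "of_nat (Suc n) * F $ Suc n = (D * F) $ n"
      using fps_deriv_nth[of F n] assms(2) by simp
    also have "\<dots> = (D * G) $ n"
      using Suc by (simp add: fps_mult_nth)
    also have "\<dots> = of_nat (Suc n) * G $ Suc n"
      using fps_deriv_nth[of G n] assms(3) by simp
    finally have "F $ Suc n = G $ Suc n"
      by (rule mult_of_nat_cancel_mseries[rotated]) simp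
    with Suc show ?case by (auto simp: le_Suc_eq)
  qed
  then show ?thesis by (intro fps_ext) blast
qed

lemma exp_series_add:
  assumes "A $ 0 = 0" and "B $ 0 = 0"
  shows "exp_series (A + B) = exp_series A * exp_series B"
proof (rule fps_deriv_eq_mult_unique)
  show "fps_deriv (exp_series (A + B)) = fps_deriv (A + B) * exp_series (A + B)"
    using assms by (intro fps_deriv_exp_series) simp
  show "fps_deriv (exp_series A * exp_series B) = fps_deriv (A + B) * (exp_series A * exp_series B)"
    using fps_deriv_exp_series[OF assms(1)] fps_deriv_exp_series[OF assms(2)]
    by (simp add: algebra_simps)
qed simp

section \<open>Compositions\<close>

lemma is_comp_Nil [simp]: "is_comp []"
  by (simp add: is_comp_def)

lemma is_comp_Cons [simp]: "is_comp (a # xs) \<longleftrightarrow> 0 < a \<and> is_comp xs"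
  by (simp add: is_comp_def)

lemma is_comp_append [simp]: "is_comp (xs @ ys) \<longleftrightarrow> is_comp xs \<and> is_comp ys"
  by (auto simp: is_comp_def)

lemma is_comp_take: "is_comp xs \<Longrightarrow> is_comp (take k xs)"
  by (auto simp: is_comp_def dest: in_set_takeD)

lemma is_comp_drop: "is_comp xs \<Longrightarrow> is_comp (drop k xs)"
  by (auto simp: is_comp_def dest: in_set_dropD)

lemma length_le_sum_list_comp: "is_comp xs \<Longrightarrow> length xs \<le> sum_list xs"
  by (induct xs) auto

lemma sum_list_comp_pos: "is_comp xs \<Longrightarrow> xs \<noteq> [] \<Longrightarrow> 0 < sum_list xs"
  by (cases xs) auto

lemma comp_sum_list_eq_0_iff: "is_comp xs \<Longrightarrow> sum_list xs = 0 \<longleftrightarrow> xs = []"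
  by (cases xs) auto

lemma comps_0: "comps 0 = {[]}"
  unfolding comps_def using comp_sum_list_eq_0_iff by auto

lemma finite_comps: "finite (comps n)"
proof (rule finite_subset)
  show "comps n \<subseteq> {xs. set xs \<subseteq> {0..n} \<and> length xs \<le> n}"
    using length_le_sum_list_comp member_le_sum_list by (fastforce simp: comps_def)
  show "finite {xs. set xs \<subseteq> {0..n} \<and> length xs \<le> n}"
    by (rule finite_lists_length_le) simp
qed

lemma fps_power_nth_comps:
  fixes A :: "'a::comm_semiring_1 fps"
  assumes "A $ 0 = 0"
  shows "(A ^ l) $ n = (\<Sum>\<beta>\<in>{\<beta>\<in>comps n. length \<beta> = l}. \<Prod>k\<leftarrow>\<beta>. A $ k)"
proof (induct l arbitrary: n)
  case 0
  have "{\<beta>\<in>comps n. length \<beta> = 0} = (if n = 0 then {[]} else {})"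
    by (auto simp: comps_def)
  then show ?case by simp
next
  case (Suc l)
  have "(A ^ Suc l) $ n = (\<Sum>i\<in>{1..n}. A $ i * (A ^ l) $ (n - i))"
    by (simp add: fps_mult_nth, rule sum.mono_neutral_right) (auto simp: assms Suc_le_eq)
  also have "\<dots> = (\<Sum>(i, \<beta>)\<in>Sigma {1..n} (\<lambda>i. {\<beta>\<in>comps (n - i). length \<beta> = l}). A $ i * (\<Prod>k\<leftarrow>\<beta>. A $ k))"
    by (simp add: Suc sum_distrib_left sum.Sigma finite_comps)
  also have "\<dots> = (\<Sum>\<beta>\<in>{\<beta>\<in>comps n. length \<beta> = Suc l}. \<Prod>k\<leftarrow>\<beta>. A $ k)"
  proof (rule sum.reindex_bij_witness[where i = "\<lambda>\<beta>. (hd \<beta>, tl \<beta>)" and j = "\<lambda>(i, \<beta>). i # \<beta>"])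
    fix \<beta> assume "\<beta> \<in> {\<beta>\<in>comps n. length \<beta> = Suc l}"
    then obtain i \<beta>' where "\<beta> = i # \<beta>'" "0 < i" "is_comp \<beta>'" "i + sum_list \<beta>' = n" "length \<beta>' = l"
      by (cases \<beta>) (auto simp: comps_def)
    then show "(\<lambda>(i, \<beta>). i # \<beta>) (hd \<beta>, tl \<beta>) = \<beta>"
      and "(hd \<beta>, tl \<beta>) \<in> Sigma {1..n} (\<lambda>i. {\<beta>\<in>comps (n - i). length \<beta> = l})"
      by (auto simp: comps_def)
  qed (auto simp: comps_def)
  finally show ?case .
qed

lemma exp_series_nth_comps:
  assumes "A $ 0 = 0"
  shows "exp_series A $ n = (\<Sum>\<beta>\<in>comps n. mseries_of_rat (1 / fact (length \<beta>)) * (\<Prod>k\<leftarrow>\<beta>. A $ k))"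
proof -
  have "exp_series A $ n = (\<Sum>l\<le>n. \<Sum>\<beta>\<in>{\<beta>\<in>comps n. length \<beta> = l}.
      mseries_of_rat (1 / fact (length \<beta>)) * (\<Prod>k\<leftarrow>\<beta>. A $ k))"
    by (simp add: exp_series_def exp_partial_nth fps_power_nth_comps[OF assms] sum_distrib_left)
  also have "\<dots> = (\<Sum>\<beta>\<in>comps n. mseries_of_rat (1 / fact (length \<beta>)) * (\<Prod>k\<leftarrow>\<beta>. A $ k))"
    using finite_comps length_le_sum_list_comp by (intro sum.group) (auto simp: comps_def)
  finally show ?thesis .
qed

section \<open>Newton's identity\<close>

definition mdeg :: "monom \<Rightarrow> nat" where
  "mdeg m = sum m {i. m i \<noteq> 0}"

definition msingle :: "nat \<Rightarrow> nat \<Rightarrow> monom" where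
  "msingle i k = (\<lambda>j. if j = i then k else 0)"

lemma mdeg_eq_sum: "finite U \<Longrightarrow> {i. m i \<noteq> 0} \<subseteq> U \<Longrightarrow> mdeg m = sum m U"
  unfolding mdeg_def by (rule sum.mono_neutral_left) auto

lemma h_apply:
  assumes "finite {i. m i \<noteq> 0}"
  shows "h n m = (if mdeg m = n then 1 else 0)"
proof -
  let ?\<alpha> = "map m (sorted_list_of_set {i. m i \<noteq> 0})"
  have "h n m = (\<Sum>\<alpha>\<in>comps n. if ?\<alpha> = \<alpha> then 1 else 0)"
    unfolding h_def M_def using assms by (intro sum.cong) auto
  also have "\<dots> = (if ?\<alpha> \<in> comps n then 1 else 0)"
    using finite_comps by simp
  also have "?\<alpha> \<in> comps n \<longleftrightarrow> mdeg m = n"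
    using assms by (auto simp: comps_def is_comp_def sum_list_distinct_conv_sum_set mdeg_def)
  finally show ?thesis by simp
qed

lemma M_single_apply:
  assumes "0 < k"
  shows "M [k] a = (if \<exists>i. a = msingle i k then 1 else 0)"
proof -
  have "finite {j. a j \<noteq> 0} \<and> map a (sorted_list_of_set {j. a j \<noteq> 0}) = [k] \<longleftrightarrow>
        (\<exists>i. a = msingle i k)" (is "?lhs \<longleftrightarrow> ?rhs")
  proof
    assume lhs: ?lhs
    then obtain i where i: "sorted_list_of_set {j. a j \<noteq> 0} = [i]" "a i = k"
      by (cases "sorted_list_of_set {j. a j \<noteq> 0}") auto
    have "{j. a j \<noteq> 0} = {i}"
      using lhs i(1) set_sorted_list_of_set[of "{j. a j \<noteq> 0}"] by simp
    with i(2) have "a = msingle i k"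
      unfolding msingle_def by (metis (mono_tags, lifting) mem_Collect_eq singletonD singletonI)
    then show ?rhs ..
  next
    assume ?rhs
    then obtain i where a: "a = msingle i k" ..
    then have "{j. a j \<noteq> 0} = {i}"
      using assms by (auto simp: msingle_def)
    then show ?lhs
      using a by (simp add: msingle_def)
  qed
  then show ?thesis by (simp add: M_def)
qed

lemma smult_M_single:
  assumes k: "0 < k" and fin: "finite {i. m i \<noteq> 0}"
  shows "smult (M [k]) g m = (\<Sum>i | k \<le> m i. g (\<lambda>j. m j - msingle i k j))"
proof -
  have "smult (M [k]) g m = (\<Sum>a\<in>(\<lambda>i. msingle i k) ` {i. k \<le> m i}. g (\<lambda>j. m j - a j))"
    unfolding smult_eq_sum_mdivisors
  proof (rule sum.mono_neutral_cong_right)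
    show "finite (mdivisors m)"
      using fin by (rule finite_mdivisors)
    show "(\<lambda>i. msingle i k) ` {i. k \<le> m i} \<subseteq> mdivisors m"
      by (auto simp: mdivisors_def msingle_def)
    show "\<forall>a\<in>mdivisors m - (\<lambda>i. msingle i k) ` {i. k \<le> m i}. M [k] a * g (\<lambda>j. m j - a j) = 0"
    proof
      fix a assume a: "a \<in> mdivisors m - (\<lambda>i. msingle i k) ` {i. k \<le> m i}"
      have "a \<noteq> msingle i k" for i
      proof
        assume "a = msingle i k"
        moreover from this have "k \<le> m i"
          using a by (auto simp: mdivisors_def msingle_def dest: spec[of _ i])
        ultimately show False using a by auto
      qed
      then show "M [k] a * g (\<lambda>j. m j - a j) = 0" by (simp add: M_single_apply[OF k])
    qed
  qed (auto simp: M_single_apply[OF k])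
  also have "\<dots> = (\<Sum>i | k \<le> m i. g (\<lambda>j. m j - msingle i k j))"
  proof (rule sum.reindex[unfolded comp_def])
    show "inj_on (\<lambda>i. msingle i k) {i. k \<le> m i}"
    proof (rule inj_onI)
      fix x y assume "msingle x k = msingle y k"
      then have "msingle x k x = msingle y k x" by simp
      then show "x = y" using k by (simp add: msingle_def split: if_splits)
    qed
  qed
  finally show ?thesis .
qed

lemma mdeg_diff_msingle:
  assumes fin: "finite {i. m i \<noteq> 0}" and "0 < k" "k \<le> m i"
  shows "mdeg (\<lambda>j. m j - msingle i k j) + k = mdeg m"
proof -
  let ?S = "{i. m i \<noteq> 0}"
  have i: "i \<in> ?S" using assms by auto
  have "mdeg (\<lambda>j. m j - msingle i k j) + k = (m i - k) + (\<Sum>j\<in>?S - {i}. m j) + k"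
    using fin i by (subst mdeg_eq_sum[of ?S]) (auto simp: sum.remove msingle_def intro!: sum.cong)
  also have "\<dots> = mdeg m"
    using fin i assms(3) by (simp add: mdeg_def sum.remove)
  finally show ?thesis .
qed

lemma sum_card_ge_eq_mdeg:
  assumes fin: "finite {i. m i \<noteq> 0}"
  shows "(\<Sum>k=1..mdeg m. card {i. k \<le> m i}) = mdeg m"
proof -
  let ?S = "{i. m i \<noteq> 0}"
  have "(\<Sum>k=1..mdeg m. card {i. k \<le> m i}) = (\<Sum>k=1..mdeg m. \<Sum>i\<in>?S. if k \<le> m i then 1 else 0)"
  proof (rule sum.cong[OF refl])
    fix k assume "k \<in> {1..mdeg m}"
    then have "{i. k \<le> m i} = {i\<in>?S. k \<le> m i}" by auto
    then show "card {i. k \<le> m i} = (\<Sum>i\<in>?S. if k \<le> m i then 1 else 0)"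
      using fin by (simp add: sum.inter_filter[symmetric])
  qed
  also have "\<dots> = (\<Sum>i\<in>?S. \<Sum>k=1..mdeg m. if k \<le> m i then 1 else 0)"
    by (rule sum.swap)
  also have "\<dots> = (\<Sum>i\<in>?S. m i)"
  proof (rule sum.cong[OF refl])
    fix i assume "i \<in> ?S"
    then have "m i \<le> mdeg m"
      unfolding mdeg_def using fin by (intro member_le_sum) auto
    then have "{k\<in>{1..mdeg m}. k \<le> m i} = {1..m i}" by auto
    then show "(\<Sum>k=1..mdeg m. if k \<le> m i then 1 else 0) = m i"
      by (simp add: sum.inter_filter[symmetric])
  qed
  finally show ?thesis by (simp add: mdeg_def)
qed

text \<open>Coefficientwise, Newton's identity \<open>n h\<^sub>n = \<Sum>\<^sub>k M\<^sub>(\<^sub>k\<^sub>) h\<^sub>n\<^sub>-\<^sub>k\<close> counts,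
  for a monomial \<open>m\<close> of degree \<open>n\<close>, the pairs \<open>(i, k)\<close> with \<open>1 \<le> k \<le> m i\<close>.\<close>

lemma newton_identity_apply:
  assumes "finite {i. m i \<noteq> 0}"
  shows "of_nat n * h n m = (\<Sum>k=1..n. smult (M [k]) (h (n - k)) m)"
proof -
  have "smult (M [k]) (h (n - k)) m = (if mdeg m = n then of_nat (card {i. k \<le> m i}) else 0)"
    if k: "k \<in> {1..n}" for k
  proof -
    have "smult (M [k]) (h (n - k)) m = (\<Sum>i | k \<le> m i. h (n - k) (\<lambda>j. m j - msingle i k j))"
      using k assms by (intro smult_M_single) auto
    also have "\<dots> = (\<Sum>i | k \<le> m i. if mdeg m = n then 1 else 0)"
    proof (rule sum.cong[OF refl])
      fix i assume "i \<in> {i. k \<le> m i}"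
      then have "mdeg (\<lambda>j. m j - msingle i k j) + k = mdeg m"
        using k assms by (intro mdeg_diff_msingle) auto
      moreover have "finite {j. m j - msingle i k j \<noteq> 0}"
        by (rule finite_subset[OF _ assms]) auto
      ultimately show "h (n - k) (\<lambda>j. m j - msingle i k j) = (if mdeg m = n then 1 else 0)"
        using k by (auto simp: h_apply)
    qed
    finally show ?thesis by simp
  qed
  then have "(\<Sum>k=1..n. smult (M [k]) (h (n - k)) m) =
      (if mdeg m = n then of_nat (\<Sum>k=1..n. card {i. k \<le> m i}) else 0)"
    by simp
  also have "\<dots> = of_nat n * h n m"
  proof (cases "mdeg m = n")
    case True
    with sum_card_ge_eq_mdeg[OF assms] show ?thesis by (simp add: h_apply[OF assms] del: of_nat_sum)
  qed (simp add: h_apply[OF assms])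
  finally show ?thesis ..
qed

lemma h_0: "h 0 = sone"
proof
  fix m
  show "h 0 m = sone m"
  proof (cases "finite {i. m i \<noteq> 0}")
    case True
    then have "mdeg m = 0 \<longleftrightarrow> m = (\<lambda>_. 0)"
      by (auto simp: mdeg_def fun_eq_iff)
    with True show ?thesis by (simp add: h_apply sone_def)
  next
    case False
    then show ?thesis by (auto simp: h_def M_def sone_def)
  qed
qed

definition h_ms :: "nat \<Rightarrow> mseries" where
  "h_ms n = Abs_mseries (h n)"

definition p_ms :: "nat \<Rightarrow> mseries" where
  "p_ms n = Abs_mseries (p n)"

definition pc_ms :: "nat list \<Rightarrow> mseries" where
  "pc_ms \<beta> = (\<Prod>k\<leftarrow>\<beta>. p_ms k)"

lemma proper_series_h: "proper_series (h n)"
  by (auto simp: proper_series_def h_def M_def)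

lemma proper_series_p: "proper_series (p n)"
  by (auto simp: proper_series_def p_def sscale_def M_def)

lemma Rep_h_ms: "Rep_mseries (h_ms n) = h n"
  by (simp add: h_ms_def Abs_mseries_inverse proper_series_h)

lemma Rep_p_ms: "Rep_mseries (p_ms n) = p n"
  by (simp add: p_ms_def Abs_mseries_inverse proper_series_p)

lemma Rep_pc_ms: "Rep_mseries (pc_ms \<beta>) = pc \<beta>"
  by (simp add: pc_ms_def pc_def Rep_mseries_prod_list o_def Rep_p_ms)

lemma pc_ms_append: "pc_ms (xs @ ys) = pc_ms xs * pc_ms ys"
  by (simp add: pc_ms_def)

lemma Rep_of_nat_mult_p_ms: "0 < k \<Longrightarrow> Rep_mseries (of_nat k * p_ms k) = M [k]"
  by (simp add: Rep_mseries_of_nat_mult Rep_p_ms p_def sscale_def)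

lemma h_ms_0: "h_ms 0 = 1"
  by (simp add: Rep_mseries_inject[symmetric] Rep_h_ms one_mseries.rep_eq h_0)

lemma newton_identity:
  "of_nat (Suc n) * h_ms (Suc n) = (\<Sum>i=0..n. of_nat (Suc i) * p_ms (Suc i) * h_ms (n - i))"
proof -
  have "Rep_mseries (of_nat (Suc n) * h_ms (Suc n)) m =
        Rep_mseries (\<Sum>i=0..n. of_nat (Suc i) * p_ms (Suc i) * h_ms (n - i)) m" for m
  proof (cases "finite {i. m i \<noteq> 0}")
    case True
    have "Rep_mseries (\<Sum>i=0..n. of_nat (Suc i) * p_ms (Suc i) * h_ms (n - i)) m =
          (\<Sum>i=0..n. smult (M [Suc i]) (h (n - i)) m)"
      by (simp only: Rep_mseries_sum times_mseries.rep_eq[of "of_nat (Suc _) * p_ms (Suc _)"]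
          Rep_of_nat_mult_p_ms[OF zero_less_Suc] Rep_h_ms)
    also have "\<dots> = (\<Sum>k=1..Suc n. smult (M [k]) (h (Suc n - k)) m)"
      by (simp add: sum.atLeast_Suc_atMost_Suc_shift del: sum.cl_ivl_Suc)
    also have "\<dots> = of_nat (Suc n) * h (Suc n) m"
      using newton_identity_apply[OF True, of "Suc n"] by simp
    also have "\<dots> = Rep_mseries (of_nat (Suc n) * h_ms (Suc n)) m"
      by (simp only: Rep_mseries_of_nat_mult Rep_h_ms)
    finally show ?thesis ..
  qed (simp add: Rep_mseries_infinite_support)
  then show ?thesis by (simp add: Rep_mseries_inject[symmetric] fun_eq_iff)
qed

section \<open>Complete homogeneous functions in terms of power sums\<close>

definition h_fps :: "mseries fps" where
  "h_fps = Abs_fps h_ms"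

definition psum_fps :: "(nat \<Rightarrow> bool) \<Rightarrow> mseries fps" where
  "psum_fps P = Abs_fps (\<lambda>n. if 0 < n \<and> P n then p_ms n else 0)"

lemma psum_fps_nth_0 [simp]: "psum_fps P $ 0 = 0"
  by (simp add: psum_fps_def)

lemma h_fps_eq_exp_series: "h_fps = exp_series (psum_fps (\<lambda>_. True))"
proof (rule fps_deriv_eq_mult_unique)
  show "fps_deriv h_fps = fps_deriv (psum_fps (\<lambda>_. True)) * h_fps"
  proof (rule fps_ext)
    fix n
    have "fps_deriv h_fps $ n = of_nat (Suc n) * h_ms (Suc n)"
      by (simp add: h_fps_def)
    also have "\<dots> = (\<Sum>i=0..n. of_nat (Suc i) * p_ms (Suc i) * h_ms (n - i))"
      by (rule newton_identity)
    also have "\<dots> = (fps_deriv (psum_fps (\<lambda>_. True)) * h_fps) $ n"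
      by (simp add: fps_mult_nth h_fps_def psum_fps_def mult.assoc)
    finally show "fps_deriv h_fps $ n = (fps_deriv (psum_fps (\<lambda>_. True)) * h_fps) $ n" .
  qed
  show "fps_deriv (exp_series (psum_fps (\<lambda>_. True))) =
        fps_deriv (psum_fps (\<lambda>_. True)) * exp_series (psum_fps (\<lambda>_. True))"
    by (rule fps_deriv_exp_series) simp
qed (simp add: h_fps_def h_ms_0)

lemma h_fps_eq_exp_even_mult_exp_odd: "h_fps = exp_series (psum_fps even) * exp_series (psum_fps odd)"
proof -
  have "psum_fps (\<lambda>_. True) = psum_fps even + psum_fps odd"
    by (rule fps_ext) (auto simp: psum_fps_def)
  then show ?thesis
    by (simp add: h_fps_eq_exp_series exp_series_add)
qed

lemma exp_psum_fps_nth: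
  "exp_series (psum_fps P) $ n =
   (\<Sum>\<beta> | \<beta> \<in> comps n \<and> (\<forall>k\<in>set \<beta>. P k). mseries_of_rat (1 / fact (length \<beta>)) * pc_ms \<beta>)"
proof -
  have "(\<Prod>k\<leftarrow>\<beta>. psum_fps P $ k) = (if \<forall>k\<in>set \<beta>. P k then pc_ms \<beta> else 0)" if "is_comp \<beta>" for \<beta>
    using that by (induct \<beta>) (auto simp: psum_fps_def pc_ms_def)
  then have "exp_series (psum_fps P) $ n = (\<Sum>\<beta>\<in>comps n.
      if \<forall>k\<in>set \<beta>. P k then mseries_of_rat (1 / fact (length \<beta>)) * pc_ms \<beta> else 0)"
    unfolding exp_series_nth_comps[OF psum_fps_nth_0] by (intro sum.cong) (auto simp: comps_def)
  also have "\<dots> = (\<Sum>\<beta> | \<beta> \<in> comps n \<and> (\<forall>k\<in>set \<beta>. P k). mseries_of_rat (1 / fact (length \<beta>)) * pc_ms \<beta>)"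
    by (simp add: sum.inter_filter[OF finite_comps, symmetric])
  finally show ?thesis .
qed

lemma sorted_map_odd_append:
  "\<forall>k\<in>set xs. even k \<Longrightarrow> \<forall>k\<in>set ys. odd k \<Longrightarrow> sorted (map odd (xs @ ys))"
  by (induct xs) (auto simp: sorted_iff_nth_mono)

lemma sorted_map_odd_filter:
  "sorted (map odd \<beta>) \<Longrightarrow> filter even \<beta> @ filter odd \<beta> = \<beta>"
  by (induct \<beta>) (auto simp: filter_empty_conv filter_id_conv)

lemma sum_comps_split_parity:
  fixes F G :: "nat list \<Rightarrow> 'a::comm_semiring_1"
  shows "(\<Sum>j=0..n. (\<Sum>x | x \<in> comps j \<and> (\<forall>k\<in>set x. even k). F x) *
                    (\<Sum>y | y \<in> comps (n - j) \<and> (\<forall>k\<in>set y. odd k). G y)) =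
         (\<Sum>\<beta> | \<beta> \<in> comps n \<and> sorted (map odd \<beta>). F (filter even \<beta>) * G (filter odd \<beta>))"
proof -
  define Ev where "Ev j = {x. x \<in> comps j \<and> (\<forall>k\<in>set x. even k)}" for j
  define Od where "Od j = {y. y \<in> comps j \<and> (\<forall>k\<in>set y. odd k)}" for j
  have "(\<Sum>j=0..n. (\<Sum>x\<in>Ev j. F x) * (\<Sum>y\<in>Od (n - j). G y)) =
        (\<Sum>(j, x, y)\<in>Sigma {0..n} (\<lambda>j. Ev j \<times> Od (n - j)). F x * G y)"
    by (simp add: sum_product sum.cartesian_product sum.Sigma finite_comps Ev_def Od_def)
  also have "\<dots> = (\<Sum>\<beta> | \<beta> \<in> comps n \<and> sorted (map odd \<beta>). F (filter even \<beta>) * G (filter odd \<beta>))"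
  proof (rule sum.reindex_bij_witness[where i = "\<lambda>\<beta>. (sum_list (filter even \<beta>), filter even \<beta>, filter odd \<beta>)"
        and j = "\<lambda>(j, x, y). x @ y"])
    fix \<beta> assume "\<beta> \<in> {\<beta>. \<beta> \<in> comps n \<and> sorted (map odd \<beta>)}"
    then have \<beta>: "is_comp \<beta>" "sum_list \<beta> = n" "filter even \<beta> @ filter odd \<beta> = \<beta>"
      by (simp_all add: comps_def sorted_map_odd_filter)
    then show "(\<lambda>(j, x, y). x @ y) (sum_list (filter even \<beta>), filter even \<beta>, filter odd \<beta>) = \<beta>"
      by simp
    have "sum_list (filter even \<beta>) + sum_list (filter odd \<beta>) = n"
      using \<beta> by (metis sum_list_append)
    with \<beta> show "(sum_list (filter even \<beta>), filter even \<beta>, filter odd \<beta>) \<in> Sigma {0..n} (\<lambda>j. Ev j \<times> Od (n - j))"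
      by (auto simp: Ev_def Od_def comps_def is_comp_def)
  next
    fix t assume "t \<in> Sigma {0..n} (\<lambda>j. Ev j \<times> Od (n - j))"
    then obtain j x y where t: "t = (j, x, y)" "j \<le> n" "x \<in> Ev j" "y \<in> Od (n - j)"
      by auto
    then have xy: "\<forall>k\<in>set x. even k" "\<forall>k\<in>set y. odd k" "is_comp x" "is_comp y"
      "sum_list x = j" "sum_list y = n - j"
      by (auto simp: Ev_def Od_def comps_def)
    then have "filter even (x @ y) = x" and "filter odd (x @ y) = y"
      by (auto simp: filter_empty_conv filter_id_conv)
    with xy t show "(sum_list (filter even ((\<lambda>(j, x, y). x @ y) t)), filter even ((\<lambda>(j, x, y). x @ y) t),
        filter odd ((\<lambda>(j, x, y). x @ y) t)) = t"
      and "F (filter even ((\<lambda>(j, x, y). x @ y) t)) * G (filter odd ((\<lambda>(j, x, y). x @ y) t)) =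
        (case t of (j, x, y) \<Rightarrow> F x * G y)"
      by simp_all
    from xy t show "(\<lambda>(j, x, y). x @ y) t \<in> {\<beta>. \<beta> \<in> comps n \<and> sorted (map odd \<beta>)}"
      using sorted_map_odd_append[OF xy(1,2)] by (simp add: comps_def del: map_append)
  qed
  finally show ?thesis
    by (simp add: Ev_def Od_def)
qed

lemma h_ms_eq_sum_parity_sorted:
  "h_ms n = (\<Sum>\<beta> | \<beta> \<in> comps n \<and> sorted (map odd \<beta>). mseries_of_rat (cblock \<beta>) * pc_ms \<beta>)"
proof -
  let ?c = "\<lambda>x. mseries_of_rat (1 / fact (length x))"
  have "h_ms n = (exp_series (psum_fps even) * exp_series (psum_fps odd)) $ n"
    by (simp add: h_fps_eq_exp_even_mult_exp_odd[symmetric] h_fps_def)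
  also have "\<dots> = (\<Sum>j=0..n. (\<Sum>x | x \<in> comps j \<and> (\<forall>k\<in>set x. even k). ?c x * pc_ms x) *
                           (\<Sum>y | y \<in> comps (n - j) \<and> (\<forall>k\<in>set y. odd k). ?c y * pc_ms y))"
    by (simp add: fps_mult_nth exp_psum_fps_nth)
  also have "\<dots> = (\<Sum>\<beta> | \<beta> \<in> comps n \<and> sorted (map odd \<beta>).
      ?c (filter even \<beta>) * pc_ms (filter even \<beta>) * (?c (filter odd \<beta>) * pc_ms (filter odd \<beta>)))"
    by (rule sum_comps_split_parity)
  also have "\<dots> = (\<Sum>\<beta> | \<beta> \<in> comps n \<and> sorted (map odd \<beta>). mseries_of_rat (cblock \<beta>) * pc_ms \<beta>)"
  proof (rule sum.cong[OF refl])
    fix \<beta> assume "\<beta> \<in> {\<beta>. \<beta> \<in> comps n \<and> sorted (map odd \<beta>)}"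
    then have "pc_ms \<beta> = pc_ms (filter even \<beta>) * pc_ms (filter odd \<beta>)"
      by (metis (mono_tags, lifting) mem_Collect_eq pc_ms_append sorted_map_odd_filter)
    then show "?c (filter even \<beta>) * pc_ms (filter even \<beta>) * (?c (filter odd \<beta>) * pc_ms (filter odd \<beta>)) =
        mseries_of_rat (cblock \<beta>) * pc_ms \<beta>"
      by (simp add: cblock_def mseries_of_rat_mult[symmetric] mult_ac)
  qed
  finally show ?thesis .
qed

section \<open>Partial sums\<close>

lemma psums_Nil [simp]: "psums [] = {}"
  by (simp add: psums_def)

lemma psums_Cons: "psums (a # xs) = (if xs = [] then {} else insert a ((+) a ` psums xs))"
proof (cases "xs = []")
  case False
  have "psums (a # xs) = insert a ((+) a ` psums xs)"
  proof (rule set_eqI, rule iffI)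
    fix x assume "x \<in> psums (a # xs)"
    then obtain k where k: "x = sum_list (take (Suc k) (a # xs))" "k < length xs"
      by (auto simp: psums_def gr0_conv_Suc)
    then show "x \<in> insert a ((+) a ` psums xs)"
      by (cases "k = 0") (auto simp: psums_def)
  next
    fix x assume "x \<in> insert a ((+) a ` psums xs)"
    then consider "x = a" | k where "x = a + sum_list (take k xs)" "0 < k" "k < length xs"
      by (auto simp: psums_def)
    then show "x \<in> psums (a # xs)"
    proof cases
      case 1
      with False show ?thesis
        unfolding psums_def by (intro CollectI exI[of _ 1]) simp
    next
      case 2
      then show ?thesis
        unfolding psums_def by (intro CollectI exI[of _ "Suc k"]) simp
    qed
  qed
  with False show ?thesis by simp
qed (simp add: psums_def)

lemma finite_psums [simp]: "finite (psums xs)"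
  unfolding psums_def by simp

lemma psums_bounds: "is_comp xs \<Longrightarrow> x \<in> psums xs \<Longrightarrow> 0 < x \<and> x < sum_list xs"
proof (induct xs arbitrary: x)
  case (Cons a xs)
  then have "xs \<noteq> []" by (auto simp: psums_Cons split: if_splits)
  with Cons sum_list_comp_pos[of xs] show ?case
    by (auto simp: psums_Cons)
qed simp

lemma psums_append:
  "xs \<noteq> [] \<Longrightarrow> ys \<noteq> [] \<Longrightarrow>
   psums (xs @ ys) = psums xs \<union> insert (sum_list xs) ((+) (sum_list xs) ` psums ys)"
proof (induct xs)
  case (Cons a xs)
  then show ?case
    by (cases "xs = []") (auto simp: psums_Cons image_Un image_image add.assoc)
qed simp

lemma sum_list_take_strict_mono:
  assumes "is_comp \<beta>" "i < j" "j \<le> length \<beta>"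
  shows "sum_list (take i \<beta>) < sum_list (take j \<beta>)"
proof -
  have "take j \<beta> = take i \<beta> @ take (j - i) (drop i \<beta>)"
    using take_add[of i "j - i" \<beta>] assms(2) by simp
  moreover have "0 < sum_list (take (j - i) (drop i \<beta>))"
    using assms by (intro sum_list_comp_pos is_comp_take is_comp_drop) auto
  ultimately show ?thesis by simp
qed

lemma psums_ge_hd: "is_comp (a # xs) \<Longrightarrow> x \<in> psums (a # xs) \<Longrightarrow> a \<le> x"
  using psums_bounds[of xs] by (auto simp: psums_Cons split: if_splits)

lemma psums_inj:
  "is_comp \<beta> \<Longrightarrow> is_comp \<gamma> \<Longrightarrow> sum_list \<beta> = sum_list \<gamma> \<Longrightarrow> psums \<beta> = psums \<gamma> \<Longrightarrow> \<beta> = \<gamma>"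
proof (induct \<beta> arbitrary: \<gamma>)
  case Nil
  then show ?case by (metis comp_sum_list_eq_0_iff)
next
  case (Cons a xs)
  from Cons.prems obtain b ys where \<gamma>: "\<gamma> = b # ys"
    by (cases \<gamma>) auto
  show ?case
  proof (cases "xs = [] \<or> ys = []")
    case True
    with Cons.prems \<gamma> have "xs = [] \<and> ys = []"
      by (auto simp: psums_Cons split: if_splits)
    with Cons.prems \<gamma> show ?thesis by simp
  next
    case False
    then have P: "psums (a # xs) = insert a ((+) a ` psums xs)" "psums \<gamma> = insert b ((+) b ` psums ys)"
      using \<gamma> by (simp_all add: psums_Cons)
    have "a \<le> b" "b \<le> a"
      using P Cons.prems \<gamma> psums_ge_hd by (metis insertI1)+
    then have ab: "a = b" by simp
    have "a \<notin> (+) a ` psums zs" if "is_comp zs" for zs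
      using psums_bounds[OF that] by fastforce
    then have "(+) a ` psums xs = (+) a ` psums ys"
      using P Cons.prems \<gamma> ab by (metis insert_ident is_comp_Cons)
    then have "psums xs = psums ys"
      by (simp add: inj_image_eq_iff)
    with Cons \<gamma> ab have "xs = ys" by simp
    with \<gamma> ab show ?thesis by simp
  qed
qed

definition ote_sums :: "nat list \<Rightarrow> nat set" where
  "ote_sums \<beta> = (\<lambda>i. sum_list (take i \<beta>)) ` OtE \<beta>"

lemma OtE_Cons:
  "OtE (a # xs) = (if xs \<noteq> [] \<and> odd a \<and> even (hd xs) then {1} else {}) \<union> Suc ` OtE xs"
proof (rule set_eqI)
  fix i
  show "i \<in> OtE (a # xs) \<longleftrightarrow> i \<in> (if xs \<noteq> [] \<and> odd a \<and> even (hd xs) then {1} else {}) \<union> Suc ` OtE xs"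
    by (cases i rule: nat.exhaust[case_product nat.exhaust[of "i - 1"]], simp add: OtE_def,
        cases xs, auto simp: OtE_def image_iff hd_conv_nth)
qed

lemma ote_sums_Nil [simp]: "ote_sums [] = {}"
  by (simp add: ote_sums_def OtE_def)

lemma ote_sums_Cons:
  "ote_sums (a # xs) = (if xs \<noteq> [] \<and> odd a \<and> even (hd xs) then {a} else {}) \<union> (+) a ` ote_sums xs"
  unfolding ote_sums_def OtE_Cons by (auto simp: image_Un image_image)

lemma ote_sums_subset_psums: "ote_sums xs \<subseteq> psums xs"
  unfolding ote_sums_def OtE_def psums_def by force

lemma ote_sums_eq_empty_iff: "ote_sums xs = {} \<longleftrightarrow> sorted (map odd xs)"
proof (induct xs)
  case (Cons a xs)
  then show ?case
    by (cases xs) (auto simp: ote_sums_Cons)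
qed simp

lemma ote_sums_append:
  "xs \<noteq> [] \<Longrightarrow> ys \<noteq> [] \<Longrightarrow>
   ote_sums (xs @ ys) = ote_sums xs \<union> (if odd (last xs) \<and> even (hd ys) then {sum_list xs} else {})
      \<union> (+) (sum_list xs) ` ote_sums ys"
proof (induct xs)
  case (Cons a xs)
  then show ?case
    by (cases "xs = []") (auto simp: ote_sums_Cons image_Un image_image add.assoc)
qed simp

lemma sum_list_take_differences:
  fixes S :: "nat list"
  assumes "sorted S" "k \<le> length S"
  shows "sum_list (take k (map (\<lambda>j. S ! j - (if j = 0 then 0 else S ! (j - 1))) [0..<length S])) =
         (if k = 0 then 0 else S ! (k - 1))"
  using assms(2)
proof (induct k)
  case (Suc k)
  let ?d = "\<lambda>j. S ! j - (if j = 0 then 0 else S ! (j - 1))"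
  have "take (Suc k) (map ?d [0..<length S]) = take k (map ?d [0..<length S]) @ [?d k]"
    using Suc.prems by (simp add: take_map)
  moreover have "0 < k \<Longrightarrow> S ! (k - 1) \<le> S ! k"
    using assms(1) Suc.prems by (intro sorted_nth_mono) auto
  ultimately show ?case
    using Suc by auto
qed simp

lemma psums_mo:
  assumes "is_comp \<beta>"
  shows "psums (mo \<beta>) = ote_sums \<beta>"
proof -
  let ?L = "sorted_list_of_set (ote_sums \<beta>)"
  let ?S = "?L @ [sum_list \<beta>]"
  have mo: "mo \<beta> = map (\<lambda>j. ?S ! j - (if j = 0 then 0 else ?S ! (j - 1))) [0..<length ?S]"
    by (simp add: mo_def ote_sums_def Let_def)
  have fin: "finite (ote_sums \<beta>)"
    using finite_subset[OF ote_sums_subset_psums finite_psums] .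
  have "x < sum_list \<beta>" if "x \<in> ote_sums \<beta>" for x
    using that ote_sums_subset_psums psums_bounds[OF assms] by blast
  then have "sorted ?S"
    using fin by (auto simp: sorted_append less_imp_le)
  then have take_mo: "sum_list (take k (mo \<beta>)) = ?S ! (k - 1)" if "0 < k" "k < length ?S" for k
    using sum_list_take_differences[of ?S k] that mo by simp
  have "psums (mo \<beta>) = {sum_list (take k (mo \<beta>)) | k. 0 < k \<and> k < length ?S}"
    by (simp add: psums_def mo)
  also have "\<dots> = {?S ! (k - 1) | k. 0 < k \<and> k < length ?S}"
    using take_mo by (auto; metis)
  also have "\<dots> = set ?L"
  proof (rule set_eqI, rule iffI)
    fix x assume "x \<in> {?S ! (k - 1) | k. 0 < k \<and> k < length ?S}"
    then obtain k where "x = ?S ! (k - 1)" "0 < k" "k < length ?S" by blast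
    then show "x \<in> set ?L" by (simp add: nth_append)
  next
    fix x assume "x \<in> set ?L"
    then obtain i where "i < length ?L" "x = ?L ! i" by (auto simp: in_set_conv_nth)
    then have "x = ?S ! (Suc i - 1) \<and> 0 < Suc i \<and> Suc i < length ?S" by (simp add: nth_append)
    then show "x \<in> {?S ! (k - 1) | k. 0 < k \<and> k < length ?S}" by blast
  qed
  finally show ?thesis using fin by simp
qed

section \<open>The coefficients of the shuffle functions\<close>

lemma Least_sum_list_take:
  assumes "is_comp \<beta>" "k \<le> length \<beta>"
  shows "(LEAST k'. sum_list (take k' \<beta>) = sum_list (take k \<beta>)) = k"
proof (rule Least_equality)
  fix k' assume "sum_list (take k' \<beta>) = sum_list (take k \<beta>)"
  then show "k \<le> k'"
    using sum_list_take_strict_mono[OF assms(1) _ assms(2)] by (metis less_irrefl not_le)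
qed simp

lemma c_append_Cons:
  assumes "is_comp (xs @ ys)"
  shows "c (xs @ ys) (sum_list xs # gs) = cblock xs * c ys gs"
  using Least_sum_list_take[OF assms, of "length xs"] by (simp add: c_def Let_def)

lemma blocks_self: "is_comp \<gamma> \<Longrightarrow> blocks \<gamma> \<gamma> = map (\<lambda>x. [x]) \<gamma>"
proof (induct \<gamma>)
  case (Cons x xs)
  then have "(LEAST k. sum_list (take k (x # xs)) = x) = 1"
    using Least_sum_list_take[of "x # xs" 1] by simp
  with Cons show ?case by (simp add: Let_def)
qed simp

lemma Scoef_nonzero_imp: "Scoef \<beta> \<gamma> \<noteq> 0 \<Longrightarrow> \<gamma> \<in> comps (sum_list \<beta>) \<and> psums \<gamma> \<subseteq> psums \<beta>"
  by (auto simp: Scoef_def comp_le_def split: if_splits)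

lemma Scoef_self:
  assumes "is_comp \<gamma>"
  shows "Scoef \<gamma> \<gamma> = 1"
proof -
  have "c \<gamma> \<gamma> = 1"
    unfolding c_def blocks_self[OF assms] by (induct \<gamma>) (simp_all add: cblock_def)
  with assms show ?thesis
    using psums_mo[OF assms] ote_sums_subset_psums by (simp add: Scoef_def comps_def comp_le_def)
qed

lemma psums_Cons_subset_psums_append_iff:
  assumes "is_comp xs" "is_comp gs" "xs \<noteq> []" "ys \<noteq> []" "gs \<noteq> []"
  shows "psums (sum_list xs # gs) \<subseteq> psums (xs @ ys) \<longleftrightarrow> psums gs \<subseteq> psums ys"
proof
  let ?g = "sum_list xs"
  assume sub: "psums (?g # gs) \<subseteq> psums (xs @ ys)"
  show "psums gs \<subseteq> psums ys"
  proof
    fix x assume x: "x \<in> psums gs"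
    then have "?g + x \<in> psums (xs @ ys)" and "0 < x"
      using sub psums_bounds[OF assms(2)] assms(5) by (auto simp: psums_Cons)
    moreover have "?g + x \<notin> psums xs"
      using psums_bounds[OF assms(1)] by fastforce
    ultimately show "x \<in> psums ys"
      using assms(3,4) by (auto simp: psums_append)
  qed
next
  assume "psums gs \<subseteq> psums ys"
  with assms(3-5) show "psums (sum_list xs # gs) \<subseteq> psums (xs @ ys)"
    by (auto simp: psums_Cons psums_append)
qed

lemma ote_sums_append_subset_psums_Cons_iff:
  assumes "is_comp xs" "is_comp ys" "xs \<noteq> []" "ys \<noteq> []" "gs \<noteq> []"
  shows "ote_sums (xs @ ys) \<subseteq> psums (sum_list xs # gs) \<longleftrightarrow>
         ote_sums xs = {} \<and> ote_sums ys \<subseteq> psums gs"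
proof
  let ?g = "sum_list xs"
  have P: "psums (?g # gs) = insert ?g ((+) ?g ` psums gs)"
    using assms(5) by (simp add: psums_Cons)
  have O: "ote_sums (xs @ ys) =
      ote_sums xs \<union> (if odd (last xs) \<and> even (hd ys) then {?g} else {}) \<union> (+) ?g ` ote_sums ys"
    using assms(3,4) by (rule ote_sums_append)
  assume sub: "ote_sums (xs @ ys) \<subseteq> psums (?g # gs)"
  have "x \<notin> psums (?g # gs)" if "x \<in> ote_sums xs" for x
    using that ote_sums_subset_psums psums_bounds[OF assms(1)] by (fastforce simp: P)
  with sub O have "ote_sums xs = {}" by blast
  moreover have "ote_sums ys \<subseteq> psums gs"
  proof
    fix y assume y: "y \<in> ote_sums ys"
    then have "?g + y \<in> psums (?g # gs)" and "0 < y"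
      using sub O ote_sums_subset_psums psums_bounds[OF assms(2)] by blast+
    then show "y \<in> psums gs" by (auto simp: P)
  qed
  ultimately show "ote_sums xs = {} \<and> ote_sums ys \<subseteq> psums gs" ..
next
  assume "ote_sums xs = {} \<and> ote_sums ys \<subseteq> psums gs"
  with assms(3-5) show "ote_sums (xs @ ys) \<subseteq> psums (sum_list xs # gs)"
    by (auto simp: psums_Cons ote_sums_append)
qed

lemma Scoef_append_Cons:
  assumes "is_comp xs" "is_comp ys" "is_comp gs" "xs \<noteq> []" "sum_list ys = sum_list gs"
  shows "Scoef (xs @ ys) (sum_list xs # gs) =
         (if sorted (map odd xs) then cblock xs * Scoef ys gs else 0)"
proof -
  have c: "c (xs @ ys) (sum_list xs # gs) = cblock xs * c ys gs"
    using assms by (intro c_append_Cons) simp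
  have comp: "sum_list xs # gs \<in> comps (sum_list (xs @ ys))" "gs \<in> comps (sum_list ys)"
    using assms sum_list_comp_pos[of xs] by (simp_all add: comps_def)
  show ?thesis
  proof (cases "gs = []")
    case True
    with assms have "ys = []"
      by (metis comp_sum_list_eq_0_iff)
    with True c comp show ?thesis
      using assms(1) by (simp add: Scoef_def comp_le_def psums_mo ote_sums_eq_empty_iff psums_Cons c_def)
  next
    case False
    with assms(3,5) have "ys \<noteq> []"
      by (metis comp_sum_list_eq_0_iff sum_list.Nil)
    with False c comp show ?thesis
      using assms psums_Cons_subset_psums_append_iff ote_sums_append_subset_psums_Cons_iff
      by (auto simp: Scoef_def comp_le_def psums_mo ote_sums_eq_empty_iff)
  qed
qed

lemma Scoef_Cons_eq_0:
  assumes "\<And>xs ys. \<beta> = xs @ ys \<Longrightarrow> sum_list xs \<noteq> g"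
    and "sum_list \<beta> = g + sum_list gs"
  shows "Scoef \<beta> (g # gs) = 0"
proof (cases "gs = []")
  case True
  with assms show ?thesis by (metis append_Nil2 add_0_right sum_list.Nil)
next
  case False
  have "g \<notin> psums \<beta>"
  proof
    assume "g \<in> psums \<beta>"
    then obtain k where "g = sum_list (take k \<beta>)"
      by (auto simp: psums_def)
    with assms(1)[of "take k \<beta>" "drop k \<beta>"] show False by simp
  qed
  moreover have "g \<in> psums (g # gs)"
    using False by (simp add: psums_Cons)
  ultimately show ?thesis
    by (auto simp: Scoef_def comp_le_def)
qed

definition hc_ms :: "nat list \<Rightarrow> mseries" where
  "hc_ms \<gamma> = (\<Prod>k\<leftarrow>\<gamma>. h_ms k)"

lemma Rep_hc_ms: "Rep_mseries (hc_ms \<gamma>) = hc \<gamma>"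
  by (simp add: hc_ms_def hc_def Rep_mseries_prod_list o_def Rep_h_ms)

lemma comp_append_eq_append_imp:
  assumes "is_comp xs" "is_comp ys" "xs @ ys = xs' @ ys'" "sum_list xs = sum_list xs'"
  shows "xs = xs' \<and> ys = ys'"
proof -
  have comp: "is_comp (xs @ ys)" using assms(1,2) by simp
  have "sum_list (take (length xs) (xs @ ys)) = sum_list (take (length xs') (xs @ ys))"
    using assms(3,4) by (metis append_eq_conv_conj)
  moreover have "length xs \<le> length (xs @ ys)" "length xs' \<le> length (xs @ ys)"
    using assms(3) by (simp_all, metis length_append le_add1)
  ultimately have "length xs = length xs'"
    using sum_list_take_strict_mono[OF comp] by (metis less_irrefl nat_neq_iff)
  with assms(3) show ?thesis
    by simp
qed

lemma sum_comps_add_eq_sum_append: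
  fixes F :: "nat list \<Rightarrow> 'a::comm_monoid_add"
  assumes "\<And>\<beta>. \<beta> \<in> comps (g + N) \<Longrightarrow> (\<And>xs ys. \<beta> = xs @ ys \<Longrightarrow> sum_list xs \<noteq> g) \<Longrightarrow> F \<beta> = 0"
  shows "(\<Sum>\<beta>\<in>comps (g + N). F \<beta>) = (\<Sum>(xs, ys)\<in>comps g \<times> comps N. F (xs @ ys))"
proof -
  let ?app = "\<lambda>(xs, ys). xs @ ys"
  have "(\<Sum>\<beta>\<in>comps (g + N). F \<beta>) = (\<Sum>\<beta>\<in>?app ` (comps g \<times> comps N). F \<beta>)"
  proof (rule sum.mono_neutral_right[OF finite_comps])
    show "?app ` (comps g \<times> comps N) \<subseteq> comps (g + N)"
      by (auto simp: comps_def)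
    show "\<forall>\<beta>\<in>comps (g + N) - ?app ` (comps g \<times> comps N). F \<beta> = 0"
    proof
      fix \<beta> assume \<beta>: "\<beta> \<in> comps (g + N) - ?app ` (comps g \<times> comps N)"
      have "sum_list xs \<noteq> g" if "\<beta> = xs @ ys" for xs ys
      proof
        assume "sum_list xs = g"
        with \<beta> that have "(xs, ys) \<in> comps g \<times> comps N"
          by (auto simp: comps_def)
        with \<beta> that show False by auto
      qed
      with \<beta> assms show "F \<beta> = 0" by blast
    qed
  qed
  also have "\<dots> = (\<Sum>(xs, ys)\<in>comps g \<times> comps N. F (xs @ ys))"
  proof (rule sum.reindex_cong[where l = ?app])
    show "inj_on ?app (comps g \<times> comps N)"
    proof (rule inj_onI)
      fix p q assume "p \<in> comps g \<times> comps N" "q \<in> comps g \<times> comps N" "?app p = ?app q"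
      then show "p = q"
        using comp_append_eq_append_imp[of "fst p" "snd p" "fst q" "snd q"]
        by (auto simp: comps_def split: prod.splits)
    qed
  qed auto
  finally show ?thesis .
qed

lemma hc_ms_eq_sum_Scoef:
  "is_comp \<gamma> \<Longrightarrow> hc_ms \<gamma> = (\<Sum>\<beta>\<in>comps (sum_list \<gamma>). mseries_of_rat (Scoef \<beta> \<gamma>) * pc_ms \<beta>)"
proof (induct \<gamma>)
  case Nil
  then show ?case by (simp add: comps_0 hc_ms_def pc_ms_def Scoef_self)
next
  case (Cons g gs)
  then have g: "0 < g" and gs: "is_comp gs" by simp_all
  define N where "N = sum_list gs"
  let ?even_first = "\<lambda>xs. if sorted (map odd xs) then mseries_of_rat (cblock xs) else 0"
  have "(\<Sum>\<beta>\<in>comps (g + N). mseries_of_rat (Scoef \<beta> (g # gs)) * pc_ms \<beta>) =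
      (\<Sum>(xs, ys)\<in>comps g \<times> comps N. mseries_of_rat (Scoef (xs @ ys) (g # gs)) * pc_ms (xs @ ys))"
    by (rule sum_comps_add_eq_sum_append) (simp add: Scoef_Cons_eq_0 comps_def N_def)
  also have "\<dots> = (\<Sum>(xs, ys)\<in>comps g \<times> comps N.
      ?even_first xs * pc_ms xs * (mseries_of_rat (Scoef ys gs) * pc_ms ys))"
  proof (rule sum.cong[OF refl], clarify)
    fix xs ys assume xy: "xs \<in> comps g" "ys \<in> comps N"
    with g have "xs \<noteq> []" by (auto simp: comps_def)
    with xy gs have "Scoef (xs @ ys) (g # gs) = (if sorted (map odd xs) then cblock xs * Scoef ys gs else 0)"
      using Scoef_append_Cons[of xs ys gs] by (auto simp: comps_def N_def)
    then show "mseries_of_rat (Scoef (xs @ ys) (g # gs)) * pc_ms (xs @ ys) =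
        ?even_first xs * pc_ms xs * (mseries_of_rat (Scoef ys gs) * pc_ms ys)"
      by (simp add: mseries_of_rat_mult pc_ms_append mult_ac)
  qed
  also have "\<dots> = (\<Sum>xs\<in>comps g. ?even_first xs * pc_ms xs) *
                  (\<Sum>ys\<in>comps N. mseries_of_rat (Scoef ys gs) * pc_ms ys)"
    by (simp add: sum_product sum.cartesian_product)
  also have "(\<Sum>xs\<in>comps g. ?even_first xs * pc_ms xs) = h_ms g"
    unfolding h_ms_eq_sum_parity_sorted sum.inter_filter[OF finite_comps] by (intro sum.cong) auto
  also have "(\<Sum>ys\<in>comps N. mseries_of_rat (Scoef ys gs) * pc_ms ys) = hc_ms gs"
    using Cons gs by (simp add: N_def)
  finally show ?case
    by (simp add: hc_ms_def N_def add.commute)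
qed

lemma hc_eq_sum_Scoef:
  "is_comp \<gamma> \<Longrightarrow> hc \<gamma> m = (\<Sum>\<beta>\<in>comps (sum_list \<gamma>). Scoef \<beta> \<gamma> * pc \<beta> m)"
  using arg_cong[OF hc_ms_eq_sum_Scoef, of \<gamma> "\<lambda>x. Rep_mseries x m"]
  by (simp add: Rep_hc_ms Rep_mseries_sum Rep_mseries_of_rat_mult Rep_pc_ms)

section \<open>The dual basis\<close>

lemma unitriangular_system_homogeneous:
  fixes a :: "'i \<Rightarrow> 'i \<Rightarrow> 'a::comm_ring_1" and r :: "'i \<Rightarrow> nat"
  assumes "finite C"
    and diag: "\<And>i. i \<in> C \<Longrightarrow> a i i = 1"
    and triangular: "\<And>i j. i \<in> C \<Longrightarrow> j \<in> C \<Longrightarrow> i \<noteq> j \<Longrightarrow> r i \<le> r j \<Longrightarrow> a i j = 0"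
    and supp: "{j. x j \<noteq> 0} \<subseteq> C"
    and sol: "\<And>i. i \<in> C \<Longrightarrow> (\<Sum>j\<in>C. x j * a i j) = 0"
  shows "x = (\<lambda>_. 0)"
proof (rule ccontr)
  assume "x \<noteq> (\<lambda>_. 0)"
  then obtain j where "x j \<noteq> 0" by auto
  then obtain i where i: "x i \<noteq> 0" and min: "\<And>j. x j \<noteq> 0 \<Longrightarrow> r i \<le> r j"
    using ex_has_least_nat[of "\<lambda>j. x j \<noteq> 0" j r] by blast
  with supp have "i \<in> C" by blast
  have "x j * a i j = 0" if "j \<in> C - {i}" for j
    using that min triangular[OF \<open>i \<in> C\<close>] by (cases "x j = 0") auto
  then have "(\<Sum>j\<in>C. x j * a i j) = x i"
    using \<open>finite C\<close> \<open>i \<in> C\<close> diag by (simp add: sum.remove)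
  with sol[OF \<open>i \<in> C\<close>] i show False by simp
qed

lemma unitriangular_system_solvable:
  fixes a :: "'i \<Rightarrow> 'i \<Rightarrow> 'a::comm_ring_1" and r :: "'i \<Rightarrow> nat"
  assumes "finite C"
    and diag: "\<And>i. i \<in> C \<Longrightarrow> a i i = 1"
    and triangular: "\<And>i j. i \<in> C \<Longrightarrow> j \<in> C \<Longrightarrow> i \<noteq> j \<Longrightarrow> r i \<le> r j \<Longrightarrow> a i j = 0"
  shows "\<exists>x. {j. x j \<noteq> 0} \<subseteq> C \<and> (\<forall>i\<in>C. (\<Sum>j\<in>C. x j * a i j) = b i)"
  using assms
proof (induct C rule: finite_ranking_induct[where f = r])
  case empty
  then show ?case by auto
next
  case (insert k C)
  then obtain x where x: "{j. x j \<noteq> 0} \<subseteq> C" "\<forall>i\<in>C. (\<Sum>j\<in>C. x j * a i j) = b i"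
    by auto
  show ?case
  proof (cases "k \<in> C")
    case True
    then have "insert k C = C" by blast
    with x show ?thesis by auto
  next
    case False
    define x' where "x' = x(k := b k - (\<Sum>j\<in>C. x j * a k j))"
    have C: "(\<Sum>j\<in>C. x' j * a i j) = (\<Sum>j\<in>C. x j * a i j)" for i
      using False by (auto simp: x'_def intro: sum.cong)
    have "(\<Sum>j\<in>insert k C. x' j * a i j) = b i" if "i \<in> insert k C" for i
    proof (cases "i = k")
      case True
      with insert.prems False C show ?thesis
        using insert.hyps(1) by (simp add: x'_def)
    next
      case ne: False
      with that have "a i k = 0"
        using insert.hyps(2) insert.prems by blast
      with that ne show ?thesis
        using insert.hyps(1) False C x(2) by simp
    qed
    moreover have "{j. x' j \<noteq> 0} \<subseteq> insert k C"
      using x(1) by (auto simp: x'_def)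
    ultimately show ?thesis by blast
  qed
qed

lemma unitriangular_system_unique_solution:
  fixes a :: "'i \<Rightarrow> 'i \<Rightarrow> 'a::comm_ring_1" and r :: "'i \<Rightarrow> nat"
  assumes "finite C"
    and diag: "\<And>i. i \<in> C \<Longrightarrow> a i i = 1"
    and triangular: "\<And>i j. i \<in> C \<Longrightarrow> j \<in> C \<Longrightarrow> i \<noteq> j \<Longrightarrow> r i \<le> r j \<Longrightarrow> a i j = 0"
  shows "\<exists>!x. {j. x j \<noteq> 0} \<subseteq> C \<and> (\<forall>i\<in>C. (\<Sum>j\<in>C. x j * a i j) = b i)"
proof -
  obtain x where x: "{j. x j \<noteq> 0} \<subseteq> C" "\<forall>i\<in>C. (\<Sum>j\<in>C. x j * a i j) = b i"
    using unitriangular_system_solvable[of C a r b, OF assms] by blast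
  moreover have "y = x" if y: "{j. y j \<noteq> 0} \<subseteq> C" "\<forall>i\<in>C. (\<Sum>j\<in>C. y j * a i j) = b i" for y
  proof -
    have "(\<lambda>j. y j - x j) = (\<lambda>_. 0)"
      using assms
    proof (rule unitriangular_system_homogeneous)
      show "{j. y j - x j \<noteq> 0} \<subseteq> C"
      proof
        fix j assume "j \<in> {j. y j - x j \<noteq> 0}"
        then have "y j \<noteq> 0 \<or> x j \<noteq> 0" by auto
        with x(1) y(1) show "j \<in> C" by blast
      qed
      show "(\<Sum>j\<in>C. (y j - x j) * a i j) = 0" if "i \<in> C" for i
        using that x(2) y(2) by (simp add: left_diff_distrib sum_subtractf)
    qed
    then show ?thesis by (auto simp: fun_eq_iff)
  qed
  ultimately show ?thesis by blast
qed

lemma Scoef_eq_0_if_card_psums_le: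
  assumes "is_comp \<beta>" "is_comp \<gamma>" "\<beta> \<noteq> \<gamma>" "card (psums \<beta>) \<le> card (psums \<gamma>)"
  shows "Scoef \<beta> \<gamma> = 0"
proof (rule ccontr)
  assume "Scoef \<beta> \<gamma> \<noteq> 0"
  then have "sum_list \<gamma> = sum_list \<beta>" and sub: "psums \<gamma> \<subseteq> psums \<beta>"
    using Scoef_nonzero_imp by (auto simp: comps_def)
  moreover from sub assms(4) have "psums \<gamma> = psums \<beta>"
    by (metis card_mono card_subset_eq finite_psums le_antisym)
  ultimately show False
    using psums_inj[OF assms(2,1)] assms(3) by simp
qed

lemma pair_S_eq_sum:
  "finite C \<Longrightarrow> {\<gamma>. f \<gamma> \<noteq> 0} \<subseteq> C \<Longrightarrow> pair_S f \<beta> = (\<Sum>\<gamma>\<in>C. f \<gamma> * Scoef \<beta> \<gamma>)"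
  unfolding pair_S_def by (rule sum.mono_neutral_left) auto

lemma ex1_dual_S:
  fixes C :: "nat list set"
  assumes "finite C" "\<And>\<gamma>. \<gamma> \<in> C \<Longrightarrow> is_comp \<gamma>"
  shows "\<exists>!f. {\<gamma>. f \<gamma> \<noteq> 0} \<subseteq> C \<and> (\<forall>\<beta>\<in>C. (\<Sum>\<gamma>\<in>C. f \<gamma> * Scoef \<beta> \<gamma>) = t \<beta>)"
  using assms(1)
proof (rule unitriangular_system_unique_solution[where r = "\<lambda>\<gamma>. card (psums \<gamma>)"])
  show "Scoef \<gamma> \<gamma> = 1" if "\<gamma> \<in> C" for \<gamma>
    using that assms(2) by (simp add: Scoef_self)
  show "Scoef \<beta> \<gamma> = 0" if "\<beta> \<in> C" "\<gamma> \<in> C" "\<beta> \<noteq> \<gamma>" "card (psums \<beta>) \<le> card (psums \<gamma>)" for \<beta> \<gamma>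
    using that assms(2) by (simp add: Scoef_eq_0_if_card_psums_le)
qed

definition is_dual_S :: "nat list \<Rightarrow> (nat list \<Rightarrow> rat) \<Rightarrow> bool" where
  "is_dual_S \<alpha> f \<longleftrightarrow> is_nsym f \<and> (\<forall>\<beta>. is_comp \<beta> \<longrightarrow> pair_S f \<beta> = (if \<beta> = \<alpha> then 1 else 0))"

lemma is_dual_S_exists:
  assumes "is_comp \<alpha>"
  shows "\<exists>f. is_dual_S \<alpha> f"
proof -
  let ?C = "comps (sum_list \<alpha>)"
  have "\<exists>!f. {\<gamma>. f \<gamma> \<noteq> 0} \<subseteq> ?C \<and>
      (\<forall>\<beta>\<in>?C. (\<Sum>\<gamma>\<in>?C. f \<gamma> * Scoef \<beta> \<gamma>) = (if \<beta> = \<alpha> then 1 else 0))"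
    by (rule ex1_dual_S[OF finite_comps]) (simp add: comps_def)
  then obtain f where f: "{\<gamma>. f \<gamma> \<noteq> 0} \<subseteq> ?C"
      "\<forall>\<beta>\<in>?C. (\<Sum>\<gamma>\<in>?C. f \<gamma> * Scoef \<beta> \<gamma>) = (if \<beta> = \<alpha> then 1 else 0)"
    by blast
  have "pair_S f \<beta> = (if \<beta> = \<alpha> then 1 else 0)" if "is_comp \<beta>" for \<beta>
  proof (cases "\<beta> \<in> ?C")
    case False
    then have "Scoef \<beta> \<gamma> = 0" if "\<gamma> \<in> ?C" for \<gamma>
      using that \<open>is_comp \<beta>\<close> Scoef_nonzero_imp[of \<beta> \<gamma>] by (auto simp: comps_def)
    with False assms \<open>is_comp \<beta>\<close> show ?thesis
      by (auto simp: pair_S_eq_sum[OF finite_comps f(1)] comps_def)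
  qed (use f in \<open>simp add: pair_S_eq_sum[OF finite_comps f(1)]\<close>)
  moreover have "is_nsym f"
    using f(1) finite_subset[OF f(1) finite_comps] by (auto simp: is_nsym_def comps_def)
  ultimately show ?thesis
    by (auto simp: is_dual_S_def)
qed

lemma is_dual_S_unique:
  assumes "is_dual_S \<alpha> f" and "is_dual_S \<alpha> g"
  shows "f = g"
proof -
  let ?D = "{\<gamma>. f \<gamma> \<noteq> 0} \<union> {\<gamma>. g \<gamma> \<noteq> 0}"
  let ?\<delta> = "\<lambda>\<beta>. if \<beta> = \<alpha> then 1 else 0 :: rat"
  have D: "finite ?D" "\<And>\<gamma>. \<gamma> \<in> ?D \<Longrightarrow> is_comp \<gamma>"
    using assms by (auto simp: is_dual_S_def is_nsym_def)
  have "\<forall>\<beta>\<in>?D. (\<Sum>\<gamma>\<in>?D. h \<gamma> * Scoef \<beta> \<gamma>) = ?\<delta> \<beta>" if "h = f \<or> h = g" for h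
    using that assms D(2) pair_S_eq_sum[OF D(1), of h] by (auto simp: is_dual_S_def)
  then show "f = g"
    using ex1_dual_S[OF D, of ?\<delta>] by blast
qed

lemma is_dual_S_Sstar:
  assumes "is_comp \<alpha>"
  shows "is_dual_S \<alpha> (Sstar \<alpha>)"
proof -
  have "Sstar \<alpha> = (THE f. is_dual_S \<alpha> f)"
    by (simp add: Sstar_def is_dual_S_def)
  then show ?thesis
    using theI'[of "is_dual_S \<alpha>"] is_dual_S_exists[OF assms] is_dual_S_unique by metis
qed

lemma pi_map_eq_pc_if_is_dual_S:
  assumes "is_dual_S \<alpha> f" and "is_comp \<alpha>"
  shows "pi_map f = pc \<alpha>"
proof
  fix m
  have f: "is_nsym f" "\<forall>\<beta>. is_comp \<beta> \<longrightarrow> pair_S f \<beta> = (if \<beta> = \<alpha> then 1 else 0)"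
    using assms(1) by (simp_all add: is_dual_S_def)
  let ?F = "{\<gamma>. f \<gamma> \<noteq> 0}"
  let ?B = "insert \<alpha> (\<Union>\<gamma>\<in>?F. comps (sum_list \<gamma>))"
  have F: "finite ?F" "\<And>\<gamma>. \<gamma> \<in> ?F \<Longrightarrow> is_comp \<gamma>"
    using f(1) by (auto simp: is_nsym_def)
  have B: "finite ?B" "\<And>\<beta>. \<beta> \<in> ?B \<Longrightarrow> is_comp \<beta>"
    using F(1) finite_comps \<open>is_comp \<alpha>\<close> by (auto simp: comps_def)
  have hc: "hc \<gamma> m = (\<Sum>\<beta>\<in>?B. Scoef \<beta> \<gamma> * pc \<beta> m)" if "\<gamma> \<in> ?F" for \<gamma>
    unfolding hc_eq_sum_Scoef[OF F(2)[OF that]]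
  proof (rule sum.mono_neutral_left[OF B(1)])
    show "comps (sum_list \<gamma>) \<subseteq> ?B"
      using that by blast
    show "\<forall>\<beta>\<in>?B - comps (sum_list \<gamma>). Scoef \<beta> \<gamma> * pc \<beta> m = 0"
      using B(2) Scoef_nonzero_imp by (fastforce simp: comps_def)
  qed
  have "pi_map f m = (\<Sum>\<gamma>\<in>?F. \<Sum>\<beta>\<in>?B. f \<gamma> * Scoef \<beta> \<gamma> * pc \<beta> m)"
    by (simp add: pi_map_def hc sum_distrib_left mult.assoc)
  also have "\<dots> = (\<Sum>\<beta>\<in>?B. pair_S f \<beta> * pc \<beta> m)"
    by (subst sum.swap) (simp add: pair_S_def sum_distrib_right)
  also have "\<dots> = (\<Sum>\<beta>\<in>?B. if \<beta> = \<alpha> then pc \<beta> m else 0)"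
    using f(2) B(2) by (intro sum.cong) auto
  also have "\<dots> = pc \<alpha> m"
    using B(1) by simp
  finally show "pi_map f m = pc \<alpha> m" .
qed

theorem mainTheorem6:
  fixes \<alpha> :: "nat list"
  assumes "is_comp \<alpha>"
  shows "pi_map (Sstar \<alpha>) = pc \<alpha>"
  using is_dual_S_Sstar[OF assms] assms by (rule pi_map_eq_pc_if_is_dual_S)

end
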